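(* Let $A$ and $A'$ be pomset automata such that $A'$ weakly implements $A$. Then there exists a pomset automaton $A''$ implementing $A$. Furthermore, if $A'$ is $n$-forking (resp. flat-branching, parsimonious), then so is $A''$.
   Context: Fix a finite alphabet $\Sigma$. Pomsets are isomorphism classes of finite labelled posets over $\Sigma$; $1$ is the empty pomset; $\mathsf{SP}(\Sigma)$ is the smallest set containing $1$ and the one-element pomsets closed under sequential composition $\cdot$ and parallel composition $\parallel$. A pomset automaton (PA) is $A=\langle Q,F,\delta,\gamma\rangle$ with $F\subseteq Q$, $\delta:Q\times\Sigma\to2^Q$, $\gamma:Q\times\mathbb{M}(Q)\to2^Q$ ($\mathbb{M}(Q)$ finite multisets over $Q$, $|\phi|$ its size), each $q$ having finitely many $\phi$ with $\gamma(q,\phi)\ne\emptyset$; it is finite if $Q$ is finite. The run relation $\to_A$ is the smallest relation with: $q\xrightarrow{1}_A q$; $q\xrightarrow{a}_A q'$ if $q'\in\delta(q,a)$; $q\xrightarrow{U\cdot V}_A q'$ if $q\xrightarrow{U}_A q''\xrightarrow{V}_A q'$; $q\xrightarrow{U_1\parallel\cdots\parallel U_n}_A q'$ if $q'\in\gamma(q,\{\!|q_1,\dots,q_n|\!\})$ and each $q_i\xrightarrow{U_i}_A q_i'$ for some $q_i'\in F$. $L_A(q)=\{U\mid\exists q'\in F.\ q\xrightarrow{U}_A q'\}$. The support relation $\preceq_A$ is the smallest preorder on $Q$ with $q'\preceq_A q$ whenever $q'\in\delta(q,a)$, or $q'\in\gamma(q,\phi)$, or $q'\in\phi$ with $\gamma(q,\phi)\ne\emptyset$;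 $A$ is fork-acyclic if $r\in\phi$ and $\gamma(q,\phi)\ne\emptyset$ imply $q\not\preceq_A r$. $A'=\langle Q',F',\delta',\gamma'\rangle$ implements $A=\langle Q,F,\delta,\gamma\rangle$ if $Q\subseteq Q'$, $L_A(q)=L_{A'}(q)$ for every $q\in Q$, and if $A$ is fork-acyclic (resp. finite) then so is $A'$. $A'$ weakly implements $A$ if for every state $q$ of $A$ there is a finite set $Q_q$ of states of $A'$ with $L_A(q)=\bigcup_{x\in Q_q}L_{A'}(x)$, and if $A$ is fork-acyclic (resp. finite) then so is $A'$. $A$ is $n$-forking if $\gamma(q,\phi)\ne\emptyset$ implies $|\phi|\ge n$; parsimonious if $q\in\phi$ and $\gamma(p,\phi)\ne\emptyset$ imply $1\notin L_A(q)$; flat-branching if $\gamma(q,\phi)\ne\emptyset$ and $p\in\phi$ imply $\gamma(p,\psi)\cap F=\emptyset$ for all $\psi$. *)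

theory Defs
  imports Main "HOL-Library.Multiset"
begin

record 'a lposet =
  carrier :: "nat set"
  ord :: "(nat \<times> nat) set"
  lab :: "nat \<Rightarrow> 'a"

definition wf_lp :: "'a lposet \<Rightarrow> bool" where
  "wf_lp U \<longleftrightarrow> finite (carrier U) \<and> ord U \<subseteq> carrier U \<times> carrier U
     \<and> refl_on (carrier U) (ord U) \<and> antisym (ord U) \<and> trans (ord U)"

definition lp_iso :: "'a lposet \<Rightarrow> 'a lposet \<Rightarrow> bool" where
  "lp_iso U V \<longleftrightarrow> (\<exists>f. bij_betw f (carrier U) (carrier V)
     \<and> (\<forall>x\<in>carrier U. \<forall>y\<in>carrier U. (x, y) \<in> ord U \<longleftrightarrow> (f x, f y) \<in> ord V)
     \<and> (\<forall>x\<in>carrier U. lab V (f x) = lab U x))"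

text \<open>A pomset is an isomorphism class of finite labelled posets.\<close>
type_synonym 'a pomset = "'a lposet set"

definition pc :: "'a lposet \<Rightarrow> 'a pomset" where
  "pc U = {V. wf_lp V \<and> lp_iso U V}"

definition pomsets :: "'a pomset set" where
  "pomsets = {pc U | U. wf_lp U}"

definition seq_lp :: "'a lposet \<Rightarrow> 'a lposet \<Rightarrow> 'a lposet" where
  "seq_lp U V = \<lparr> carrier = (\<lambda>x. 2*x) ` carrier U \<union> (\<lambda>x. 2*x+1) ` carrier V,
     ord = (\<lambda>(x,y). (2*x, 2*y)) ` ord U \<union> (\<lambda>(x,y). (2*x+1, 2*y+1)) ` ord V
           \<union> {(2*x, 2*y+1) | x y. x \<in> carrier U \<and> y \<in> carrier V},
     lab = (\<lambda>n. if even n then lab U (n div 2) else lab V (n div 2)) \<rparr>"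

definition par_lp :: "'a lposet \<Rightarrow> 'a lposet \<Rightarrow> 'a lposet" where
  "par_lp U V = \<lparr> carrier = (\<lambda>x. 2*x) ` carrier U \<union> (\<lambda>x. 2*x+1) ` carrier V,
     ord = (\<lambda>(x,y). (2*x, 2*y)) ` ord U \<union> (\<lambda>(x,y). (2*x+1, 2*y+1)) ` ord V,
     lab = (\<lambda>n. if even n then lab U (n div 2) else lab V (n div 2)) \<rparr>"

definition rep :: "'a pomset \<Rightarrow> 'a lposet" where
  "rep X = (SOME U. U \<in> X)"

definition pseq :: "'a pomset \<Rightarrow> 'a pomset \<Rightarrow> 'a pomset" where
  "pseq X Y = pc (seq_lp (rep X) (rep Y))"

definition ppar :: "'a pomset \<Rightarrow> 'a pomset \<Rightarrow> 'a pomset" where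
  "ppar X Y = pc (par_lp (rep X) (rep Y))"

definition pone :: "'a pomset" where
  "pone = pc \<lparr> carrier = {}, ord = {}, lab = (\<lambda>_. undefined) \<rparr>"

definition patom :: "'a \<Rightarrow> 'a pomset" where
  "patom a = pc \<lparr> carrier = {0}, ord = {(0,0)}, lab = (\<lambda>_. a) \<rparr>"

fun ppar_list :: "'a pomset list \<Rightarrow> 'a pomset" where
  "ppar_list [] = pone"
| "ppar_list [U] = U"
| "ppar_list (U # Us) = ppar U (ppar_list Us)"

record ('q, 'a) pa =
  states :: "'q set"
  fin :: "'q set"
  delta :: "'q \<Rightarrow> 'a \<Rightarrow> 'q set"
  gamma :: "'q \<Rightarrow> 'q multiset \<Rightarrow> 'q set"

definition is_pa :: "('q, 'a) pa \<Rightarrow> bool" where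
  "is_pa A \<longleftrightarrow> fin A \<subseteq> states A
    \<and> (\<forall>q a. delta A q a \<subseteq> states A \<and> (q \<notin> states A \<longrightarrow> delta A q a = {}))
    \<and> (\<forall>q \<phi>. gamma A q \<phi> \<subseteq> states A)
    \<and> (\<forall>q \<phi>. gamma A q \<phi> \<noteq> {} \<longrightarrow> q \<in> states A \<and> set_mset \<phi> \<subseteq> states A)
    \<and> (\<forall>q \<in> states A. finite {\<phi>. gamma A q \<phi> \<noteq> {}})"

definition finite_pa :: "('q, 'a) pa \<Rightarrow> bool" where
  "finite_pa A \<longleftrightarrow> finite (states A)"

inductive run :: "('q, 'a) pa \<Rightarrow> 'q \<Rightarrow> 'a pomset \<Rightarrow> 'q \<Rightarrow> bool" for A where
  run_one: "run A q pone q"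
| run_atom: "q' \<in> delta A q a \<Longrightarrow> run A q (patom a) q'"
| run_seq: "run A q U q'' \<Longrightarrow> run A q'' V q' \<Longrightarrow> run A q (pseq U V) q'"
| run_par: "q' \<in> gamma A q (mset qs) \<Longrightarrow> length Us = length qs \<Longrightarrow>
    (\<forall>i < length qs. \<exists>qf \<in> fin A. run A (qs ! i) (Us ! i) qf) \<Longrightarrow>
    run A q (ppar_list Us) q'"

definition lang :: "('q, 'a) pa \<Rightarrow> 'q \<Rightarrow> 'a pomset set" where
  "lang A q = {U. \<exists>q' \<in> fin A. run A q U q'}"

definition support_step :: "('q, 'a) pa \<Rightarrow> ('q \<times> 'q) set" where
  "support_step A = {(q', q). (\<exists>a. q' \<in> delta A q a)
      \<or> (\<exists>\<phi>. q' \<in> gamma A q \<phi>)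
      \<or> (\<exists>\<phi>. q' \<in># \<phi> \<and> gamma A q \<phi> \<noteq> {})}"

definition supp :: "('q, 'a) pa \<Rightarrow> 'q \<Rightarrow> 'q \<Rightarrow> bool" where
  "supp A q' q \<longleftrightarrow> (q', q) \<in> (support_step A)\<^sup>*"

definition fork_acyclic :: "('q, 'a) pa \<Rightarrow> bool" where
  "fork_acyclic A \<longleftrightarrow> (\<forall>q \<phi> r. r \<in># \<phi> \<and> gamma A q \<phi> \<noteq> {} \<longrightarrow> \<not> supp A q r)"

definition implements :: "('q \<Rightarrow> 'r) \<Rightarrow> ('q, 'a) pa \<Rightarrow> ('r, 'a) pa \<Rightarrow> bool" where
  "implements \<iota> A A' \<longleftrightarrow> inj_on \<iota> (states A) \<and> \<iota> ` states A \<subseteq> states A'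
    \<and> (\<forall>q \<in> states A. lang A q = lang A' (\<iota> q))
    \<and> (fork_acyclic A \<longrightarrow> fork_acyclic A')
    \<and> (finite_pa A \<longrightarrow> finite_pa A')"

definition weakly_implements :: "('q, 'a) pa \<Rightarrow> ('r, 'a) pa \<Rightarrow> bool" where
  "weakly_implements A A' \<longleftrightarrow>
    (\<forall>q \<in> states A. \<exists>Qq. finite Qq \<and> Qq \<subseteq> states A' \<and> lang A q = (\<Union>x \<in> Qq. lang A' x))
    \<and> (fork_acyclic A \<longrightarrow> fork_acyclic A')
    \<and> (finite_pa A \<longrightarrow> finite_pa A')"

definition n_forking :: "nat \<Rightarrow> ('q, 'a) pa \<Rightarrow> bool" where
  "n_forking n A \<longleftrightarrow> (\<forall>q \<phi>. gamma A q \<phi> \<noteq> {} \<longrightarrow> size \<phi> \<ge> n)"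

definition parsimonious :: "('q, 'a) pa \<Rightarrow> bool" where
  "parsimonious A \<longleftrightarrow> (\<forall>p q \<phi>. q \<in># \<phi> \<and> gamma A p \<phi> \<noteq> {} \<longrightarrow> pone \<notin> lang A q)"

definition flat_branching :: "('q, 'a) pa \<Rightarrow> bool" where
  "flat_branching A \<longleftrightarrow> (\<forall>q \<phi> p \<psi>. gamma A q \<phi> \<noteq> {} \<and> p \<in># \<phi> \<longrightarrow> gamma A p \<psi> \<inter> fin A = {})"

end

theory Submission
  imports Defs
begin

(* For every state q of A, weak implementation provides finitely many states Q q of A' whose
   languages together make up L_A(q).  Add to A' one fresh state per q that behaves like the union
   of Q q: it accepts iff one of them does, and it has all of their outgoing transitions.  No
   transition leads back into a fresh state, so a run from it either never moves, reading only a
   pomset that every state reads in place, or enters A' after its first step through one of the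
   states in Q q; hence its language is the union of theirs.  The copy of A' is untouched and every
   fork of the new automaton is a fork of A' with its targets renamed, which transfers
   fork-acyclicity, n-forking, flat branching and parsimony. *)

lemma mset_eq_image_mset_injD:
  assumes "inj f" and "mset xs = image_mset f M"
  shows "\<exists>ys. xs = map f ys \<and> mset ys = M"
proof (intro exI conjI)
  have "set xs \<subseteq> range f"
    using assms(2) by (metis multiset.set_map set_mset_mset image_subset_iff rangeI)
  then show "xs = map f (map (inv f) xs)"
    by (induction xs) (auto simp: f_inv_into_f)
  show "mset (map (inv f) xs) = M"
    using assms by (simp add: multiset.map_comp)
qed

definition constituents :: "'q set \<Rightarrow> ('q \<Rightarrow> 'r set) \<Rightarrow> 'q + 'r \<Rightarrow> 'r set" where
  "constituents S Q s = (case s of Inl q \<Rightarrow> if q \<in> S then Q q else {} | Inr x \<Rightarrow> {x})"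

definition union_states_pa ::
  "'q set \<Rightarrow> ('q \<Rightarrow> 'r set) \<Rightarrow> ('r, 'a) pa \<Rightarrow> ('q + 'r, 'a) pa" where
  "union_states_pa S Q A' =
    \<lparr> states = Inl ` S \<union> Inr ` states A',
      fin = {s. constituents S Q s \<inter> fin A' \<noteq> {}},
      delta = (\<lambda>s a. Inr ` (\<Union>x \<in> constituents S Q s. delta A' x a)),
      gamma = (\<lambda>s \<phi>. {Inr y | x \<psi> y. x \<in> constituents S Q s \<and> \<phi> = image_mset Inr \<psi>
                                        \<and> y \<in> gamma A' x \<psi>}) \<rparr>"

context
  fixes S :: "'q set" and Q :: "'q \<Rightarrow> 'r set" and A' :: "('r, 'a) pa"
begin

lemma constituents_Inl [simp]: "constituents S Q (Inl q) = (if q \<in> S then Q q else {})"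
  and constituents_Inr [simp]: "constituents S Q (Inr x) = {x}"
  by (simp_all add: constituents_def)

lemma states_union_states_pa: "states (union_states_pa S Q A') = Inl ` S \<union> Inr ` states A'"
  by (simp add: union_states_pa_def)

lemma fin_union_states_pa_iff:
  "s \<in> fin (union_states_pa S Q A') \<longleftrightarrow> constituents S Q s \<inter> fin A' \<noteq> {}"
  by (simp add: union_states_pa_def)

lemma Inr_in_fin_union_states_pa_iff [simp]:
  "Inr y \<in> fin (union_states_pa S Q A') \<longleftrightarrow> y \<in> fin A'"
  by (simp add: fin_union_states_pa_iff)

lemma delta_union_states_pa_iff:
  "t \<in> delta (union_states_pa S Q A') s a \<longleftrightarrow>
     (\<exists>x \<in> constituents S Q s. \<exists>y. t = Inr y \<and> y \<in> delta A' x a)"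
  by (auto simp: union_states_pa_def)

lemma gamma_union_states_pa_iff:
  "t \<in> gamma (union_states_pa S Q A') s \<phi> \<longleftrightarrow>
     (\<exists>x \<in> constituents S Q s. \<exists>\<psi> y. \<phi> = image_mset Inr \<psi> \<and> t = Inr y \<and> y \<in> gamma A' x \<psi>)"
  by (auto simp: union_states_pa_def)

lemma gamma_union_states_pa_nonempty_iff:
  "gamma (union_states_pa S Q A') s \<phi> \<noteq> {} \<longleftrightarrow>
     (\<exists>x \<in> constituents S Q s. \<exists>\<psi>. \<phi> = image_mset Inr \<psi> \<and> gamma A' x \<psi> \<noteq> {})"
  unfolding ex_in_conv[symmetric] gamma_union_states_pa_iff by blast

lemma run_union_states_paI:
  assumes "run A' x U y" and "x \<in> constituents S Q s"
  shows "run (union_states_pa S Q A') s U (Inr y) \<or> (y = x \<and> run (union_states_pa S Q A') s U s)"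
  using assms
proof (induction arbitrary: s rule: run.induct)
  case (run_one x)
  then show ?case by (simp add: run.run_one)
next
  case (run_atom y x a)
  then show ?case by (blast intro: run.run_atom delta_union_states_pa_iff[THEN iffD2])
next
  case (run_seq x U z V y)
  have "run (union_states_pa S Q A') (Inr z) V (Inr y)"
    using run_seq.IH(2)[of "Inr z"] by auto
  show ?case
    using run_seq.IH(1)[OF run_seq.prems]
  proof
    assume "run (union_states_pa S Q A') s U (Inr z)"
    with \<open>run _ (Inr z) V (Inr y)\<close> show ?case by (blast intro: run.run_seq)
  next
    assume "z = x \<and> run (union_states_pa S Q A') s U s"
    with run_seq.IH(2)[of s] run_seq.prems show ?case by (blast intro: run.run_seq)
  qed
next
  case (run_par y x qs Us)
  have "Inr y \<in> gamma (union_states_pa S Q A') s (mset (map Inr qs))"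
    using run_par.hyps(1) run_par.prems unfolding gamma_union_states_pa_iff by auto
  moreover have
    "\<exists>qf \<in> fin (union_states_pa S Q A'). run (union_states_pa S Q A') (map Inr qs ! i) (Us ! i) qf"
    if "i < length qs" for i
  proof -
    obtain qf where "qf \<in> fin A'" and "run (union_states_pa S Q A') (Inr (qs ! i)) (Us ! i) (Inr qf)"
      using run_par.IH \<open>i < length qs\<close> by (metis constituents_Inr singletonI)
    then show ?thesis using \<open>i < length qs\<close> by auto
  qed
  ultimately have "run (union_states_pa S Q A') s (ppar_list Us) (Inr y)"
    using run_par.hyps(2) by (intro run.run_par[where qs = "map Inr qs"]) auto
  then show ?case ..
qed

text \<open>The first disjunct accounts for runs made of trivial steps only: the pomset they read is a
  sequential composition of copies of \<open>pone\<close>, which need not be provably equal to \<open>pone\<close>.\<close>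
lemma run_union_states_paD:
  assumes "run (union_states_pa S Q A') s U t"
  shows "(t = s \<and> (\<forall>x. run A' x U x))
    \<or> (\<exists>x \<in> constituents S Q s. \<exists>y. t = Inr y \<and> run A' x U y)"
  using assms
proof (induction rule: run.induct)
  case (run_one s)
  then show ?case by (simp add: run.run_one)
next
  case (run_atom t s a)
  then show ?case by (auto simp: delta_union_states_pa_iff intro: run.run_atom)
next
  case (run_seq s U r V t)
  from run_seq.IH(1) show ?case
  proof
    assume "r = s \<and> (\<forall>x. run A' x U x)"
    with run_seq.IH(2) show ?case by (blast intro: run.run_seq)
  next
    assume "\<exists>x \<in> constituents S Q s. \<exists>y. r = Inr y \<and> run A' x U y"
    with run_seq.IH(2) show ?case by (fastforce intro: run.run_seq)
  qed
next
  case (run_par t s qs Us)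
  obtain x \<psi> y where x: "x \<in> constituents S Q s" and qs: "mset qs = image_mset Inr \<psi>"
    and t: "t = Inr y" and y: "y \<in> gamma A' x \<psi>"
    using run_par.hyps(1) unfolding gamma_union_states_pa_iff by blast
  obtain ps where ps: "qs = map Inr ps" "mset ps = \<psi>"
    using mset_eq_image_mset_injD[OF _ qs] by auto
  have "\<exists>qf \<in> fin A'. run A' (ps ! i) (Us ! i) qf" if "i < length ps" for i
    using run_par.IH that ps by fastforce
  then have "run A' x (ppar_list Us) y"
    using y ps run_par.hyps(2) by (intro run.run_par[where qs = ps]) auto
  then show ?case using x t by blast
qed

lemma lang_union_states_pa:
  "lang (union_states_pa S Q A') s = (\<Union>x \<in> constituents S Q s. lang A' x)"
proof
  show "lang (union_states_pa S Q A') s \<subseteq> (\<Union>x \<in> constituents S Q s. lang A' x)"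
  proof
    fix U assume "U \<in> lang (union_states_pa S Q A') s"
    then obtain t where t: "t \<in> fin (union_states_pa S Q A')" "run (union_states_pa S Q A') s U t"
      unfolding lang_def by blast
    from run_union_states_paD[OF t(2)] t(1) show "U \<in> (\<Union>x \<in> constituents S Q s. lang A' x)"
      unfolding lang_def fin_union_states_pa_iff by fastforce
  qed
next
  show "(\<Union>x \<in> constituents S Q s. lang A' x) \<subseteq> lang (union_states_pa S Q A') s"
  proof
    fix U assume "U \<in> (\<Union>x \<in> constituents S Q s. lang A' x)"
    then obtain x y where x: "x \<in> constituents S Q s" and y: "y \<in> fin A'" and "run A' x U y"
      unfolding lang_def by blast
    from run_union_states_paI[OF this(3) x] show "U \<in> lang (union_states_pa S Q A') s"
    proof
      assume "run (union_states_pa S Q A') s U (Inr y)"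
      with y show ?thesis unfolding lang_def by auto
    next
      assume "y = x \<and> run (union_states_pa S Q A') s U s"
      moreover have "s \<in> fin (union_states_pa S Q A')"
        using x y \<open>y = x \<and> _\<close> unfolding fin_union_states_pa_iff by blast
      ultimately show ?thesis unfolding lang_def by blast
    qed
  qed
qed

lemma lang_union_states_pa_Inr [simp]: "lang (union_states_pa S Q A') (Inr x) = lang A' x"
  by (simp add: lang_union_states_pa)

lemma support_step_union_states_pa_Inr:
  assumes "(s, Inr z) \<in> support_step (union_states_pa S Q A')"
  shows "\<exists>y. s = Inr y \<and> (y, z) \<in> support_step A'"
  using assms unfolding support_step_def delta_union_states_pa_iff gamma_union_states_pa_iff
    gamma_union_states_pa_nonempty_iff by auto

lemma supp_union_states_pa_Inr:
  assumes "supp (union_states_pa S Q A') s (Inr r)"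
  shows "\<exists>y. s = Inr y \<and> supp A' y r"
  using assms unfolding supp_def
proof (induction rule: converse_rtrancl_induct)
  case base
  then show ?case by blast
next
  case (step s s')
  then show ?case
    using support_step_union_states_pa_Inr by (metis converse_rtrancl_into_rtrancl)
qed

lemma finite_constituents:
  assumes "\<forall>q \<in> S. finite (Q q)"
  shows "finite (constituents S Q s)"
  using assms by (cases s) auto

lemma is_pa_union_states_pa:
  assumes "is_pa A'" and "\<forall>q \<in> S. finite (Q q)"
  shows "is_pa (union_states_pa S Q A')"
  unfolding is_pa_def
proof (intro conjI allI ballI impI)
  show "fin (union_states_pa S Q A') \<subseteq> states (union_states_pa S Q A')"
  proof
    fix s assume "s \<in> fin (union_states_pa S Q A')"
    then show "s \<in> states (union_states_pa S Q A')"
      using assms(1) unfolding is_pa_def fin_union_states_pa_iff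
      by (cases s) (auto simp: states_union_states_pa split: if_splits)
  qed
  fix s a
  show "delta (union_states_pa S Q A') s a \<subseteq> states (union_states_pa S Q A')"
    using assms(1) unfolding is_pa_def subset_iff delta_union_states_pa_iff states_union_states_pa
    by blast
  show "s \<notin> states (union_states_pa S Q A') \<Longrightarrow> delta (union_states_pa S Q A') s a = {}"
    using assms(1) unfolding is_pa_def by (cases s) (auto simp: union_states_pa_def image_iff)
next
  fix s \<phi>
  show "gamma (union_states_pa S Q A') s \<phi> \<subseteq> states (union_states_pa S Q A')"
    using assms(1) unfolding is_pa_def subset_iff gamma_union_states_pa_iff states_union_states_pa
    by blast
  assume "gamma (union_states_pa S Q A') s \<phi> \<noteq> {}"
  then obtain x \<psi> where x: "x \<in> constituents S Q s" and \<phi>: "\<phi> = image_mset Inr \<psi>"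
    and fork: "gamma A' x \<psi> \<noteq> {}"
    unfolding gamma_union_states_pa_nonempty_iff by blast
  have "x \<in> states A'" and "set_mset \<psi> \<subseteq> states A'"
    using assms(1) fork unfolding is_pa_def by blast+
  then show "s \<in> states (union_states_pa S Q A')" and "set_mset \<phi> \<subseteq> states (union_states_pa S Q A')"
    using x \<phi> by (cases s; auto simp: states_union_states_pa split: if_splits)+
next
  fix s
  have "finite {\<psi>. gamma A' x \<psi> \<noteq> {}}" for x
  proof (cases "x \<in> states A'")
    case False
    then have "{\<psi>. gamma A' x \<psi> \<noteq> {}} = {}"
      using assms(1) unfolding is_pa_def by blast
    then show ?thesis by simp
  qed (use assms(1) in \<open>simp add: is_pa_def\<close>)
  then have "finite (image_mset Inr ` (\<Union>x \<in> constituents S Q s. {\<psi>. gamma A' x \<psi> \<noteq> {}}))"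
    using finite_constituents[OF assms(2)] by blast
  moreover have "{\<phi>. gamma (union_states_pa S Q A') s \<phi> \<noteq> {}}
      \<subseteq> image_mset Inr ` (\<Union>x \<in> constituents S Q s. {\<psi>. gamma A' x \<psi> \<noteq> {}})"
    unfolding gamma_union_states_pa_nonempty_iff by blast
  ultimately show "finite {\<phi>. gamma (union_states_pa S Q A') s \<phi> \<noteq> {}}"
    by (rule finite_subset[rotated])
qed

lemma finite_pa_union_states_pa:
  assumes "finite S" and "finite_pa A'"
  shows "finite_pa (union_states_pa S Q A')"
  using assms unfolding finite_pa_def by (simp add: states_union_states_pa)

lemma fork_acyclic_union_states_pa:
  assumes "fork_acyclic A'"
  shows "fork_acyclic (union_states_pa S Q A')"
  unfolding fork_acyclic_def
proof (intro allI impI notI)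
  fix s \<phi> r
  assume "r \<in># \<phi> \<and> gamma (union_states_pa S Q A') s \<phi> \<noteq> {}" and "supp (union_states_pa S Q A') s r"
  then obtain x \<psi> r' where x: "x \<in> constituents S Q s" and fork: "gamma A' x \<psi> \<noteq> {}"
    and r': "r = Inr r'" "r' \<in># \<psi>" and "supp (union_states_pa S Q A') s (Inr r')"
    unfolding gamma_union_states_pa_nonempty_iff by force
  then obtain y where "s = Inr y" and "supp A' y r'"
    using supp_union_states_pa_Inr by blast
  with x fork r' assms show False
    unfolding fork_acyclic_def by auto
qed

lemma n_forking_union_states_pa:
  assumes "n_forking n A'"
  shows "n_forking n (union_states_pa S Q A')"
  using assms unfolding n_forking_def gamma_union_states_pa_nonempty_iff by fastforce

lemma flat_branching_union_states_pa:
  assumes "flat_branching A'"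
  shows "flat_branching (union_states_pa S Q A')"
  using assms unfolding flat_branching_def gamma_union_states_pa_nonempty_iff
  by (fastforce simp: gamma_union_states_pa_iff)

lemma parsimonious_union_states_pa:
  assumes "parsimonious A'"
  shows "parsimonious (union_states_pa S Q A')"
  using assms unfolding parsimonious_def gamma_union_states_pa_nonempty_iff by fastforce

end

theorem lemma6p8:
  fixes A :: "('q, 'a::finite) pa" and A' :: "('r, 'a) pa"
  assumes "is_pa A" and "is_pa A'" and "weakly_implements A A'"
  shows "\<exists>(\<iota> :: 'q \<Rightarrow> 'q + 'r) (A'' :: ('q + 'r, 'a) pa). is_pa A'' \<and> implements \<iota> A A''
           \<and> (\<forall>n. n_forking n A' \<longrightarrow> n_forking n A'')
           \<and> (flat_branching A' \<longrightarrow> flat_branching A'')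
           \<and> (parsimonious A' \<longrightarrow> parsimonious A'')"
proof -
  obtain Q where Q: "\<forall>q \<in> states A. finite (Q q) \<and> lang A q = (\<Union>x \<in> Q q. lang A' x)"
    using assms(3) unfolding weakly_implements_def by metis
  let ?A'' = "union_states_pa (states A) Q A'"
  have "implements Inl A ?A''"
    using assms(3) Q unfolding implements_def weakly_implements_def finite_pa_def
    by (auto simp: states_union_states_pa lang_union_states_pa
        intro: fork_acyclic_union_states_pa finite_pa_union_states_pa[unfolded finite_pa_def])
  moreover have "is_pa ?A''"
    using assms(2) Q by (simp add: is_pa_union_states_pa)
  ultimately show ?thesis
    using n_forking_union_states_pa flat_branching_union_states_pa parsimonious_union_states_pa
    by blast
qed

end
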